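(* Let $G$ be a finite group with a normal subgroup $H\cong D_n$ such that $G/H\cong(\mathbb Z/2)^2$, and let $c_4>2$. Then there is no admissible homomorphism $f:T(2,2,2,c_4)\to G$ for cover type III-c, i.e. there is no surjective homomorphism $f:T(2,2,2,c_4)\to G$ such that $f(\gamma_1),f(\gamma_2),f(\gamma_3)$ have order $2$, $f(\gamma_4)$ has order $c_4$, $\pi_H(f(\gamma_i))\neq 1$ for $i=1,2,3$ and $\pi_H(f(\gamma_4))=1$.
   Context: $D_n=\langle x,y\mid x^n=y^2=1,\ yxy^{-1}=x^{-1}\rangle$. $T(2,2,2,c_4):=\langle\gamma_1,\dots,\gamma_4\mid \gamma_1\gamma_2\gamma_3\gamma_4=1,\ \gamma_1^2=\gamma_2^2=\gamma_3^2=\gamma_4^{c_4}=1\rangle$. $\pi_H:G\to G/H$ is the quotient map; the condition on $\pi_H\circ f$ expresses that $H$ corresponds to the genus zero $(\mathbb Z/2)^2$-cover of $\mathbb P^1$ branched at the first three of the four branch points with branching index 2. *)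

theory Defs
  imports "HOL-Algebra.Algebra"
begin

text \<open>The dihedral group D_n of order 2n (n >= 1), realised concretely: the pair (a, e)
  stands for x^a y^e, with 0 <= a < n.  Then
  (x^a y^e)(x^b y^f) = x^(a + (-1)^e b) y^(e+f).\<close>
definition dihedral_group :: "nat \<Rightarrow> (int \<times> bool) monoid" where
  "dihedral_group n =
     \<lparr> carrier = {0..<int n} \<times> UNIV,
       monoid.mult = (\<lambda>(a, e) (b, f). ((a + (if e then - b else b)) mod int n, e \<noteq> f)),
       one = (0, False) \<rparr>"

definition klein_four :: "(int \<times> int) monoid" where
  "klein_four = integer_mod_group 2 \<times>\<times> integer_mod_group 2"

end

theory Submission
  imports Defs
begin

text \<open>The fourth generator \<open>d\<close> lies in \<open>H \<cong> D\<^sub>n\<close> and has order greater than two, so it is a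
  rotation.  Every conjugate of \<open>d\<close> is again a rotation of order greater than two, and the
  centraliser in \<open>H\<close> of such a rotation is exactly the rotation subgroup \<open>R\<close>; hence \<open>R\<close>, of
  order \<open>n\<close>, is normal in \<open>G\<close> and \<open>G/R\<close> has order \<open>4 \<cdot> 2n / n = 8\<close>.  But \<open>G/R\<close> is generated by
  the images of the first three generators, three involutions with product one, so it is a
  quotient of the Klein four group.\<close>

lemma dihedral_group_mult [simp]:
  "(a, e) \<otimes>\<^bsub>dihedral_group n\<^esub> (b, f) = ((a + (if e then - b else b)) mod int n, e \<noteq> f)"
  by (simp add: dihedral_group_def)

lemma carrier_dihedral_group: "carrier (dihedral_group n) = {0..<int n} \<times> UNIV"
  by (simp add: dihedral_group_def)

lemma card_carrier_klein_four: "card (carrier klein_four) = 4"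
  by (simp add: klein_four_def carrier_integer_mod_group card_cartesian_product)

lemma (in group) conjugate_mult:
  assumes "g \<in> carrier G" "x \<in> carrier G" "y \<in> carrier G"
  shows "(g \<otimes> x \<otimes> inv g) \<otimes> (g \<otimes> y \<otimes> inv g) = g \<otimes> (x \<otimes> y) \<otimes> inv g"
  using assms by (simp add: m_assoc) (simp add: m_assoc[symmetric])

lemma (in group) conjugate_eq_one_iff:
  assumes "g \<in> carrier G" "x \<in> carrier G"
  shows "g \<otimes> x \<otimes> inv g = \<one> \<longleftrightarrow> x = \<one>"
  using assms by (metis inv_closed m_closed r_inv r_one l_inv l_one m_assoc)

lemma (in group) generate_three_involutions_subset:
  assumes carr: "A \<in> carrier G" "B \<in> carrier G" "C \<in> carrier G"
    and invol: "A \<otimes> A = \<one>" "B \<otimes> B = \<one>" "C \<otimes> C = \<one>"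
    and prod: "A \<otimes> B \<otimes> C = \<one>"
  shows "generate G {A, B, C, \<one>} \<subseteq> {\<one>, A, B, A \<otimes> B}"
proof -
  have inv_self: "inv A = A" "inv B = B" "inv C = C"
    using carr invol inv_char by metis+
  have C_eq: "C = B \<otimes> A"
    using carr prod inv_self by (metis inv_equality m_closed inv_mult_group)
  have comm: "B \<otimes> A = A \<otimes> B"
    using carr inv_self C_eq by (metis inv_mult_group)
  have AAB: "A \<otimes> (A \<otimes> B) = B" and ABB: "A \<otimes> B \<otimes> B = A"
    using carr invol by (simp_all add: m_assoc[symmetric] m_assoc)
  have BAB: "B \<otimes> (A \<otimes> B) = A" and ABA: "A \<otimes> B \<otimes> A = B"
    using carr comm AAB ABB by (metis m_assoc)+
  have ABAB: "A \<otimes> B \<otimes> (A \<otimes> B) = \<one>"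
    using carr ABA invol by (metis m_assoc m_closed)
  show ?thesis
  proof
    fix x assume "x \<in> generate G {A, B, C, \<one>}"
    then show "x \<in> {\<one>, A, B, A \<otimes> B}"
    proof induction
      case one then show ?case by simp
    next
      case (incl h) then show ?case using C_eq comm by auto
    next
      case (inv h) then show ?case using C_eq comm inv_self by auto
    next
      case (eng h1 h2)
      from eng.IH show ?case
        using carr invol by (elim insertE emptyE; simp add: comm AAB ABB BAB ABA ABAB)
    qed
  qed
qed

lemma (in normal) order_FactGroup_mult_card: "order (G Mod H) * card H = order G"
  by (simp add: FactGroup_def lagrange order_def subgroup_axioms)

lemma (in normal) order_FactGroup_le_4:
  assumes carr: "a \<in> carrier G" "b \<in> carrier G" "c \<in> carrier G" and "d \<in> H"
    and sq: "a [^] (2::nat) = \<one>" "b [^] (2::nat) = \<one>" "c [^] (2::nat) = \<one>"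
    and prod: "a \<otimes> b \<otimes> c \<otimes> d = \<one>"
    and gen: "generate G {a, b, c, d} = carrier G"
  shows "order (G Mod H) \<le> 4"
proof -
  let ?Q = "G Mod H" and ?\<pi> = "\<lambda>x. H #> x"
  interpret Q: group ?Q by (rule factorgroup_is_group)
  interpret \<pi>: group_hom G ?Q ?\<pi>
    by (simp add: group_hom_def group_hom_axioms_def is_group Q.is_group r_coset_hom_Mod)
  have dG: "d \<in> carrier G" using \<open>d \<in> H\<close> subset by blast
  have \<pi>d: "?\<pi> d = \<one>\<^bsub>?Q\<^esub>" using rcos_const[OF is_group \<open>d \<in> H\<close>] by simp
  have invol: "?\<pi> x \<otimes>\<^bsub>?Q\<^esub> ?\<pi> x = \<one>\<^bsub>?Q\<^esub>" if "x \<in> carrier G" "x [^] (2::nat) = \<one>" for x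
  proof -
    have "x \<otimes> x = \<one>" using that by (simp add: numeral_2_eq_2)
    then show ?thesis using that(1) by (metis \<pi>.hom_mult \<pi>.hom_one)
  qed
  have "?\<pi> a \<otimes>\<^bsub>?Q\<^esub> ?\<pi> b \<otimes>\<^bsub>?Q\<^esub> ?\<pi> c \<otimes>\<^bsub>?Q\<^esub> ?\<pi> d = \<one>\<^bsub>?Q\<^esub>"
    using carr dG prod \<pi>.hom_one by (metis \<pi>.hom_mult m_closed)
  then have prod_Q: "?\<pi> a \<otimes>\<^bsub>?Q\<^esub> ?\<pi> b \<otimes>\<^bsub>?Q\<^esub> ?\<pi> c = \<one>\<^bsub>?Q\<^esub>"
    using carr \<pi>d by (metis \<pi>.hom_closed Q.m_closed Q.r_one)
  have "carrier ?Q = ?\<pi> ` generate G {a, b, c, d}"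
    using gen carrier_FactGroup by simp
  also have "\<dots> = generate ?Q {?\<pi> a, ?\<pi> b, ?\<pi> c, \<one>\<^bsub>?Q\<^esub>}"
    using carr dG \<pi>d by (simp add: \<pi>.generate_img[symmetric])
  also have "\<dots> \<subseteq> {\<one>\<^bsub>?Q\<^esub>, ?\<pi> a, ?\<pi> b, ?\<pi> a \<otimes>\<^bsub>?Q\<^esub> ?\<pi> b}"
    using carr sq invol prod_Q by (intro Q.generate_three_involutions_subset) auto
  finally have "order ?Q \<le> card {\<one>\<^bsub>?Q\<^esub>, ?\<pi> a, ?\<pi> b, ?\<pi> a \<otimes>\<^bsub>?Q\<^esub> ?\<pi> b}"
    unfolding order_def by (intro card_mono) auto
  also have "\<dots> \<le> 4"
    using card_length[of "[\<one>\<^bsub>?Q\<^esub>, ?\<pi> a, ?\<pi> b, ?\<pi> a \<otimes>\<^bsub>?Q\<^esub> ?\<pi> b]"] by simp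
  finally show ?thesis .
qed

locale dihedral_normal_subgroup = normal H G for H and G (structure) +
  fixes n :: nat and \<phi> :: "'a \<Rightarrow> int \<times> bool"
  assumes iso_dihedral: "\<phi> \<in> iso (G\<lparr>carrier := H\<rparr>) (dihedral_group n)"
begin

definition rotations :: "'a set" where
  "rotations = {x \<in> H. \<not> snd (\<phi> x)}"

lemma one_in_H: "\<one> \<in> H"
  by (rule subgroup.one_closed[OF subgroup_axioms])

lemma \<phi>_mult: "x \<in> H \<Longrightarrow> y \<in> H \<Longrightarrow> \<phi> (x \<otimes> y) = \<phi> x \<otimes>\<^bsub>dihedral_group n\<^esub> \<phi> y"
  using iso_dihedral by (auto simp: iso_def hom_def)

lemma snd_\<phi>_mult: "x \<in> H \<Longrightarrow> y \<in> H \<Longrightarrow> snd (\<phi> (x \<otimes> y)) = (snd (\<phi> x) \<noteq> snd (\<phi> y))"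
  using \<phi>_mult by (cases "\<phi> x"; cases "\<phi> y") auto

lemma bij_betw_\<phi>: "bij_betw \<phi> H ({0..<int n} \<times> UNIV)"
  using iso_dihedral by (simp add: iso_def carrier_dihedral_group)

lemma \<phi>_eqD: "x \<in> H \<Longrightarrow> y \<in> H \<Longrightarrow> \<phi> x = \<phi> y \<Longrightarrow> x = y"
  using bij_betw_\<phi> by (auto simp: bij_betw_def dest: inj_onD)

lemma fst_\<phi>_bounds: "x \<in> H \<Longrightarrow> 0 \<le> fst (\<phi> x) \<and> fst (\<phi> x) < int n"
  using bij_betw_apply[OF bij_betw_\<phi>, of x] by (auto simp: mem_Times_iff)

lemma n_pos: "n > 0"
  using fst_\<phi>_bounds[OF one_in_H] by simp

lemma card_H: "card H = 2 * n"
  using bij_betw_same_card[OF bij_betw_\<phi>] by (simp add: card_cartesian_product)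

text \<open>\<open>\<phi> \<one>\<close> is a right identity for the preimage of \<open>(0, False)\<close>, and in the concrete group
  the only right identity of \<open>(0, False)\<close> is \<open>(0, False)\<close> itself.\<close>
lemma \<phi>_one: "\<phi> \<one> = (0, False)"
proof -
  have "(0, False) \<in> \<phi> ` H"
    using bij_betw_imp_surj_on[OF bij_betw_\<phi>] n_pos by simp
  then obtain u where u: "u \<in> H" "\<phi> u = (0, False)" by (metis imageE)
  obtain a e where ae: "\<phi> \<one> = (a, e)" by fastforce
  have "u \<otimes> \<one> = u" using u(1) subset by (simp add: subsetD)
  then have "(0, False) = \<phi> (u \<otimes> \<one>)" using u(2) by simp
  also have "\<dots> = (a mod int n, e)" using \<phi>_mult[OF u(1) one_in_H] u(2) ae by simp
  also have "a mod int n = a" using fst_\<phi>_bounds[OF one_in_H] ae by simp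
  finally show ?thesis using ae by simp
qed

lemma mult_eq_one_iff: "x \<in> H \<Longrightarrow> y \<in> H \<Longrightarrow> x \<otimes> y = \<one> \<longleftrightarrow> \<phi> (x \<otimes> y) = (0, False)"
  by (metis \<phi>_eqD \<phi>_one one_in_H subgroup.m_closed[OF subgroup_axioms])

lemma reflection_square:
  assumes "x \<in> H" "x \<notin> rotations"
  shows "x \<otimes> x = \<one>"
proof -
  obtain a where "\<phi> x = (a, True)" using assms by (cases "\<phi> x") (auto simp: rotations_def)
  then show ?thesis using assms(1) \<phi>_mult[of x x] by (simp add: mult_eq_one_iff)
qed

lemma rotations_commute:
  assumes "x \<in> rotations" "y \<in> rotations"
  shows "x \<otimes> y = y \<otimes> x"
proof -
  have xy_H: "x \<in> H" "y \<in> H" using assms by (simp_all add: rotations_def)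
  obtain a b where "\<phi> x = (a, False)" "\<phi> y = (b, False)"
    using assms by (cases "\<phi> x"; cases "\<phi> y") (auto simp: rotations_def)
  then have "\<phi> (x \<otimes> y) = \<phi> (y \<otimes> x)" using \<phi>_mult xy_H by (simp add: add.commute)
  then show ?thesis using \<phi>_eqD xy_H subgroup.m_closed[OF subgroup_axioms] by blast
qed

text \<open>A reflection \<open>y\<close> inverts every rotation \<open>z\<close>, so if they commute then \<open>z\<^sup>2 = \<one>\<close>.\<close>
lemma rotation_if_commutes:
  assumes z: "z \<in> rotations" "z \<otimes> z \<noteq> \<one>" and y: "y \<in> H" "y \<otimes> z = z \<otimes> y"
  shows "y \<in> rotations"
proof (rule ccontr)
  assume "y \<notin> rotations"
  obtain a e where za: "\<phi> z = (a, e)" by fastforce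
  obtain b f where yb: "\<phi> y = (b, f)" by fastforce
  have zH: "z \<in> H" and ef: "\<not> e" "f"
    using z \<open>y \<notin> rotations\<close> y za yb by (auto simp: rotations_def)
  have "(b - a) mod int n = (a + b) mod int n"
    using \<phi>_mult[OF y(1) zH] \<phi>_mult[OF zH y(1)] y(2) za yb ef by simp
  then have "int n dvd (a + b) - (b - a)" by (metis mod_eq_dvd_iff)
  then have "(a + a) mod int n = 0" by (simp add: algebra_simps)
  then have "\<phi> (z \<otimes> z) = (0, False)" using \<phi>_mult[OF zH zH] za ef by simp
  then show False using mult_eq_one_iff zH z(2) by blast
qed

lemma subgroup_rotations: "subgroup rotations G"
proof (rule subgroupI)
  show "rotations \<subseteq> carrier G" using subset by (auto simp: rotations_def)
  have "\<one> \<in> rotations" using \<phi>_one one_in_H by (simp add: rotations_def)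
  then show "rotations \<noteq> {}" by blast
next
  fix x assume x: "x \<in> rotations"
  then have "x \<in> H" by (simp add: rotations_def)
  have inv_H: "inv x \<in> H" using \<open>x \<in> H\<close> by (rule m_inv_closed)
  have "inv x \<otimes> x = \<one>" using \<open>x \<in> H\<close> subset by auto
  then have "snd (\<phi> (inv x)) = snd (\<phi> x)"
    using snd_\<phi>_mult[OF inv_H \<open>x \<in> H\<close>] \<phi>_one by auto
  then show "inv x \<in> rotations" using x inv_H by (simp add: rotations_def)
next
  fix x y assume "x \<in> rotations" "y \<in> rotations"
  then show "x \<otimes> y \<in> rotations" using snd_\<phi>_mult by (auto simp: rotations_def)
qed

lemma card_rotations: "card rotations = n"
proof -
  have "bij_betw \<phi> rotations {y \<in> {0..<int n} \<times> UNIV. \<not> snd y}"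
    unfolding rotations_def by (rule bij_betw_Collect[OF bij_betw_\<phi>]) simp
  moreover have "{y \<in> {0..<int n} \<times> UNIV. \<not> snd y} = {0..<int n} \<times> {False}" by auto
  ultimately show ?thesis by (simp add: bij_betw_same_card card_cartesian_product)
qed

text \<open>Conjugation preserves \<open>H\<close>, squares and commutation.  It therefore maps \<open>d\<close> to a rotation
  \<open>d'\<close> with \<open>d'\<^sup>2 \<noteq> \<one>\<close>, and each rotation, which commutes with \<open>d\<close>, to an element of \<open>H\<close>
  commuting with \<open>d'\<close>, i.e. to a rotation.\<close>
lemma rotations_normal:
  assumes d: "d \<in> H" "d \<otimes> d \<noteq> \<one>"
  shows "rotations \<lhd> G"
proof (rule normal_invI[OF subgroup_rotations])
  fix g r assume g: "g \<in> carrier G" and r: "r \<in> rotations"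
  let ?d' = "g \<otimes> d \<otimes> inv g" and ?r' = "g \<otimes> r \<otimes> inv g"
  have dR: "d \<in> rotations" using d reflection_square by blast
  have dG: "d \<in> carrier G" and rH: "r \<in> H" and rG: "r \<in> carrier G"
    using d r subset by (auto simp: rotations_def)
  have d'_sq: "?d' \<otimes> ?d' \<noteq> \<one>"
    using g dG d(2) by (simp add: conjugate_mult conjugate_eq_one_iff)
  have d'R: "?d' \<in> rotations"
    using reflection_square inv_op_closed2[OF g d(1)] d'_sq by blast
  have "?r' \<otimes> ?d' = ?d' \<otimes> ?r'"
    using g dG rG rotations_commute[OF r dR] by (simp add: conjugate_mult)
  then show "?r' \<in> rotations"
    using rotation_if_commutes[OF d'R d'_sq] inv_op_closed2[OF g rH] by blast
qed

lemma generate_involutions_and_rotation_ne_carrier: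
  assumes order_Mod: "order (G Mod H) = 4"
    and carr: "a \<in> carrier G" "b \<in> carrier G" "c \<in> carrier G"
    and d: "d \<in> H" "d \<otimes> d \<noteq> \<one>"
    and sq: "a [^] (2::nat) = \<one>" "b [^] (2::nat) = \<one>" "c [^] (2::nat) = \<one>"
    and prod: "a \<otimes> b \<otimes> c \<otimes> d = \<one>"
  shows "generate G {a, b, c, d} \<noteq> carrier G"
proof
  assume gen: "generate G {a, b, c, d} = carrier G"
  interpret R: normal rotations G using rotations_normal[OF d] .
  have "d \<in> rotations" using d reflection_square by blast
  then have "order (G Mod rotations) \<le> 4"
    using R.order_FactGroup_le_4[OF carr _ sq prod gen] by blast
  moreover have "order (G Mod rotations) * n = order (G Mod H) * (2 * n)"
    using R.order_FactGroup_mult_card order_FactGroup_mult_card card_rotations card_H by simp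
  ultimately show False using order_Mod n_pos by simp
qed

end

theorem lemma5p9:
  fixes G :: "('g, 'b) monoid_scheme" and H :: "'g set" and n c4 :: nat
  assumes "group G"
    and "finite (carrier G)"
    and "H \<lhd> G"
    and "G\<lparr>carrier := H\<rparr> \<cong> dihedral_group n"
    and "G Mod H \<cong> klein_four"
    and "c4 > 2"
  shows "\<not> (\<exists>g1 g2 g3 g4.
            g1 \<in> carrier G \<and> g2 \<in> carrier G \<and> g3 \<in> carrier G \<and> g4 \<in> carrier G \<and>
            g1 \<otimes>\<^bsub>G\<^esub> g2 \<otimes>\<^bsub>G\<^esub> g3 \<otimes>\<^bsub>G\<^esub> g4 = \<one>\<^bsub>G\<^esub> \<and>
            g1 [^]\<^bsub>G\<^esub> (2::nat) = \<one>\<^bsub>G\<^esub> \<and> g2 [^]\<^bsub>G\<^esub> (2::nat) = \<one>\<^bsub>G\<^esub> \<and>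
            g3 [^]\<^bsub>G\<^esub> (2::nat) = \<one>\<^bsub>G\<^esub> \<and> g4 [^]\<^bsub>G\<^esub> c4 = \<one>\<^bsub>G\<^esub> \<and>
            generate G {g1, g2, g3, g4} = carrier G \<and>
            group.ord G g1 = 2 \<and> group.ord G g2 = 2 \<and> group.ord G g3 = 2 \<and>
            group.ord G g4 = c4 \<and>
            H #>\<^bsub>G\<^esub> g1 \<noteq> H \<and> H #>\<^bsub>G\<^esub> g2 \<noteq> H \<and> H #>\<^bsub>G\<^esub> g3 \<noteq> H \<and>
            H #>\<^bsub>G\<^esub> g4 = H)"
proof -
  interpret normal H G by fact
  obtain \<phi> where "\<phi> \<in> iso (G\<lparr>carrier := H\<rparr>) (dihedral_group n)"
    using assms(4) by (auto simp: is_iso_def)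
  then interpret dihedral_normal_subgroup H G n \<phi> by unfold_locales
  have order_Mod: "order (G Mod H) = 4"
    using iso_same_card[OF assms(5)] card_carrier_klein_four by (simp add: order_def)
  have in_H: "d \<in> H" if "d \<in> carrier G" "H #>\<^bsub>G\<^esub> d = H" for d
    using rcos_self[OF that(1) subgroup_axioms] that(2) by simp
  have square_ne_one: "d \<otimes>\<^bsub>G\<^esub> d \<noteq> \<one>\<^bsub>G\<^esub>" if "d \<in> carrier G" "group.ord G d = c4" for d
  proof -
    have "d [^]\<^bsub>G\<^esub> (2::nat) \<noteq> \<one>\<^bsub>G\<^esub>" using pow_eq_id that assms(6) by (auto dest: dvd_imp_le)
    then show ?thesis using that(1) by (simp add: numeral_2_eq_2)
  qed
  show ?thesis
    using generate_involutions_and_rotation_ne_carrier[OF order_Mod] in_H square_ne_one by blast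
qed

end
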